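(* Let $(p_k)_{k\in\mathbb N}$ be a probability distribution on $\mathbb N$ with $p_k>0$ for infinitely many $k$, let $\rho(t):=\#\{k\in\mathbb N:p_k\ge t^{-1}\}$ for $t>0$, and let $g$ be a function slowly varying at $\infty$. The following are equivalent: (a) $\sum_{k\ge1}p_k\mathbf 1_{\{p_k\le t\}}\sim t\,g(1/t)$ as $t\to0+$; (b) for all $\lambda>0$, $\lim_{t\to\infty}\frac{\rho(\lambda t)-\rho(t)}{g(t)}=\log\lambda$. *)

theory Defs
  imports "HOL-Analysis.Analysis" "HOL-Library.Landau_Symbols"
begin

definition slowly_varying :: "(real \<Rightarrow> real) \<Rightarrow> bool" where
  "slowly_varying g \<longleftrightarrow>
     g \<in> borel_measurable borel \<and>
     (\<forall>\<^sub>F x in at_top. g x > 0) \<and>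
     (\<forall>lam>0. ((\<lambda>x. g (lam * x) / g x) \<longlongrightarrow> 1) at_top)"

definition rho :: "(nat \<Rightarrow> real) \<Rightarrow> real \<Rightarrow> nat" where
  "rho p t = card {k. 1 \<le> k \<and> p k \<ge> inverse t}"

end

(*
  Let V(x) be the total mass of the atoms p_k < 1/x and N = rho. An atom counted by N(y) - N(x)
  has mass in [1/y, 1/x), so (N(y) - N(x))/y <= V(x) - V(y) <= (N(y) - N(x))/x. Condition (a)
  says x V(x) ~ g(x); whether atoms p_k = t are truncated or not is immaterial, because g is
  slowly varying.

  If x V(x) ~ g(x), cut [t, lambda t] into n blocks of ratio mu = lambda^(1/n): the two-sided
  estimate gives n (1 - 1/mu) <= (N(lambda t) - N(t))/g(t) <= n (mu - 1) asymptotically, and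
  both bounds tend to ln lambda as n -> oo. Conversely, sum the estimate over the blocks
  [mu^j x, mu^(j+1) x], j >= 0: the increments of N over them are ~ ln mu g(mu^j x), and the
  Potter-type bound g(mu^j x) <= (1 + d)^j g(x) yields
  ln mu/(mu - 1) <= liminf x V(x)/g(x) <= limsup x V(x)/g(x) <= mu ln mu/(mu - 1); let mu -> 1.
*)

theory Submission
  imports Defs "HOL-Real_Asymp.Real_Asymp"
begin

lemma filterlim_mult_const_at_top: "(c::real) > 0 \<Longrightarrow> filterlim (\<lambda>x. c * x) at_top at_top"
  by (rule filterlim_tendsto_pos_mult_at_top[OF tendsto_const]) (auto simp: filterlim_ident)

lemma tendsto_compose_mult_at_top:
  "(c::real) > 0 \<Longrightarrow> (f \<longlongrightarrow> L) at_top \<Longrightarrow> ((\<lambda>x. f (c * x)) \<longlongrightarrow> L) at_top"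
  using filterlim_compose filterlim_mult_const_at_top by blast

lemma eventually_compose_mult_at_top:
  "(c::real) > 0 \<Longrightarrow> eventually P at_top \<Longrightarrow> eventually (\<lambda>x. P (c * x)) at_top"
  using filterlim_mult_const_at_top filterlim_iff by blast

lemma ln_power_bounds:
  fixes mu :: real
  assumes mu: "0 < mu"
  shows "ln (mu ^ n) / mu \<le> n * (1 - 1 / mu)" and "n * (1 - 1 / mu) \<le> ln (mu ^ n)"
proof -
  have "ln (mu ^ n) / mu = n * ln mu / mu"
    using mu by (simp add: ln_realpow)
  also have "\<dots> \<le> n * (mu - 1) / mu"
    using mu ln_le_minus_one[of mu] by (intro divide_right_mono mult_left_mono) auto
  also have "\<dots> = n * (1 - 1 / mu)"
    using mu by (simp add: field_simps)
  finally show "ln (mu ^ n) / mu \<le> n * (1 - 1 / mu)" .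
  have "1 - 1 / mu \<le> ln mu"
    using mu ln_le_minus_one[of "1 / mu"] by (simp add: ln_div)
  then show "n * (1 - 1 / mu) \<le> ln (mu ^ n)"
    using mu by (simp add: ln_realpow mult_left_mono)
qed

lemma tendsto_from_approximate_bounds:
  fixes f :: "'a \<Rightarrow> real" and lo up :: "'b \<Rightarrow> real"
  assumes G: "G \<noteq> bot" and lo: "(lo \<longlongrightarrow> c) G" and up: "(up \<longlongrightarrow> c) G"
    and bounds: "\<forall>\<^sub>F r in G. (\<forall>a < lo r. \<forall>\<^sub>F x in F. a < f x) \<and> (\<forall>a > up r. \<forall>\<^sub>F x in F. f x < a)"
  shows "(f \<longlongrightarrow> c) F"
proof (rule order_tendstoI)
  fix a assume "a < c"
  then have "\<forall>\<^sub>F r in G. a < lo r \<and> (\<forall>a < lo r. \<forall>\<^sub>F x in F. a < f x)"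
    using bounds lo by (auto elim: eventually_elim2 dest: order_tendstoD)
  then show "\<forall>\<^sub>F x in F. a < f x"
    using eventually_happens'[OF G] by blast
next
  fix a assume "c < a"
  then have "\<forall>\<^sub>F r in G. up r < a \<and> (\<forall>a > up r. \<forall>\<^sub>F x in F. f x < a)"
    using bounds up by (auto elim: eventually_elim2 dest: order_tendstoD)
  then show "\<forall>\<^sub>F x in F. f x < a"
    using eventually_happens'[OF G] by blast
qed

section \<open>Slowly varying functions\<close>

lemma slowly_varying_eventually_pos: "slowly_varying g \<Longrightarrow> \<forall>\<^sub>F x in at_top. g x > 0"
  by (simp add: slowly_varying_def)

lemma slowly_varying_ratio_tendsto:
  "slowly_varying g \<Longrightarrow> c > 0 \<Longrightarrow> ((\<lambda>x. g (c * x) / g x) \<longlongrightarrow> 1) at_top"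
  by (simp add: slowly_varying_def)

lemma slowly_varying_geometric_bound:
  assumes sv: "slowly_varying g" and mu: "mu \<ge> 1" and d: "d > 0"
  shows "\<forall>\<^sub>F x in at_top. \<forall>j. g (mu ^ j * x) \<le> (1 + d) ^ j * g x"
proof -
  have "\<forall>\<^sub>F x in at_top. g (mu * x) / g x < 1 + d"
    using slowly_varying_ratio_tendsto[OF sv, of mu] mu d by (intro order_tendstoD) auto
  then have "\<forall>\<^sub>F x in at_top. g (mu * x) \<le> (1 + d) * g x"
    using slowly_varying_eventually_pos[OF sv]
    by eventually_elim (auto simp: divide_less_eq)
  then obtain x1 where x1: "\<And>x. x \<ge> x1 \<Longrightarrow> g (mu * x) \<le> (1 + d) * g x"
    unfolding eventually_at_top_linorder by blast
  have "g (mu ^ j * x) \<le> (1 + d) ^ j * g x" if x: "x \<ge> max x1 0" for x j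
  proof (induction j)
    case (Suc j)
    have "x \<le> mu ^ j * x"
      using x mu by (simp add: mult_le_cancel_right1)
    then have "g (mu * (mu ^ j * x)) \<le> (1 + d) * g (mu ^ j * x)"
      using x by (intro x1) auto
    also have "\<dots> \<le> (1 + d) * ((1 + d) ^ j * g x)"
      using Suc d by (intro mult_left_mono) auto
    finally show ?case by (simp add: mult.assoc)
  qed simp
  then show ?thesis
    unfolding eventually_at_top_linorder by blast
qed

lemma slowly_varying_dilate_quotient:
  assumes sv: "slowly_varying g" and f: "((\<lambda>x. f x / g x) \<longlongrightarrow> L) at_top" and c: "c > 0"
  shows "((\<lambda>x. f (c * x) / g x) \<longlongrightarrow> L) at_top"
proof -
  have "((\<lambda>x. f (c * x) / g (c * x) * (g (c * x) / g x)) \<longlongrightarrow> L * 1) at_top"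
    by (intro tendsto_mult tendsto_compose_mult_at_top[OF c f] slowly_varying_ratio_tendsto[OF sv c])
  moreover have "\<forall>\<^sub>F x in at_top. f (c * x) / g (c * x) * (g (c * x) / g x) = f (c * x) / g x"
    using eventually_compose_mult_at_top[OF c slowly_varying_eventually_pos[OF sv]]
    by eventually_elim simp
  ultimately show ?thesis
    using Lim_transform_eventually by fastforce
qed

text \<open>A function h is called regular here if x h(x) / g(x) tends to 1, i.e. h(x) ~ g(x) / x.\<close>

lemma regular_dilate_tendsto:
  assumes sv: "slowly_varying g" and h: "((\<lambda>x. x * h x / g x) \<longlongrightarrow> 1) at_top" and c: "c > 0"
  shows "((\<lambda>x. x * h (c * x) / g x) \<longlongrightarrow> 1 / c) at_top"
proof -
  have "((\<lambda>x. (1 / c) * ((c * x) * h (c * x) / g x)) \<longlongrightarrow> (1 / c) * 1) at_top"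
    by (intro tendsto_mult tendsto_const slowly_varying_dilate_quotient[OF sv h c])
  then show ?thesis
    using c by simp
qed

lemma regular_increment_tendsto:
  assumes sv: "slowly_varying g" and h: "((\<lambda>x. x * h x / g x) \<longlongrightarrow> 1) at_top"
    and c: "c > 0" and mu: "mu > 0"
  shows "((\<lambda>t. c * t * (h (c * t) - h (mu * (c * t))) / g t) \<longlongrightarrow> 1 - 1 / mu) at_top"
proof -
  have "((\<lambda>t. c * (t * h (c * t) / g t) - c * (t * h ((mu * c) * t) / g t))
      \<longlongrightarrow> c * (1 / c) - c * (1 / (mu * c))) at_top"
    using c mu by (intro tendsto_intros regular_dilate_tendsto[OF sv h]) auto
  moreover have "c * (1 / c) - c * (1 / (mu * c)) = 1 - 1 / mu"
    using c mu by (simp add: field_simps)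
  ultimately show ?thesis
    using c by (simp add: algebra_simps diff_divide_distrib)
qed

lemma regular_of_sandwich_dilations:
  assumes sv: "slowly_varying g" and h: "((\<lambda>x. x * h x / g x) \<longlongrightarrow> 1) at_top"
    and bounds: "\<And>mu. mu > 1 \<Longrightarrow> \<forall>\<^sub>F x in at_top. h (mu * x) \<le> k x \<and> k x \<le> h (x / mu)"
  shows "((\<lambda>x. x * k x / g x) \<longlongrightarrow> 1) at_top"
proof (rule tendsto_from_approximate_bounds[where G = "at_right 1"])
  show "((\<lambda>mu. 1 / mu) \<longlongrightarrow> 1) (at_right (1::real))"
    by real_asymp
  show "((\<lambda>mu. mu) \<longlongrightarrow> 1) (at_right (1::real))"
    by real_asymp
  show "\<forall>\<^sub>F mu in at_right 1. (\<forall>a < 1 / mu. \<forall>\<^sub>F x in at_top. a < x * k x / g x)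
      \<and> (\<forall>a > mu. \<forall>\<^sub>F x in at_top. x * k x / g x < a)"
    using eventually_at_right_less
  proof eventually_elim
    case (elim mu)
    have pos: "\<forall>\<^sub>F x in at_top. 0 < x \<and> 0 < g x \<and> h (mu * x) \<le> k x \<and> k x \<le> h (x / mu)"
      using eventually_gt_at_top[of 0] slowly_varying_eventually_pos[OF sv] bounds[OF elim]
      by eventually_elim blast
    have "\<forall>\<^sub>F x in at_top. a < x * k x / g x" if "a < 1 / mu" for a
    proof -
      have "\<forall>\<^sub>F x in at_top. a < x * h (mu * x) / g x"
        using regular_dilate_tendsto[OF sv h, of mu] elim that by (intro order_tendstoD) auto
      with pos show ?thesis
        by eventually_elim (meson divide_right_mono less_eq_real_def mult_left_mono order_less_le_trans)
    qed
    moreover have "\<forall>\<^sub>F x in at_top. x * k x / g x < a" if "mu < a" for a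
    proof -
      have "\<forall>\<^sub>F x in at_top. x * h (x / mu) / g x < a"
        using regular_dilate_tendsto[OF sv h, of "1 / mu"] elim that by (intro order_tendstoD) auto
      with pos show ?thesis
        by eventually_elim (meson divide_right_mono less_eq_real_def mult_left_mono order_le_less_trans)
    qed
    ultimately show ?case
      by blast
  qed
qed simp

lemma asymp_equiv_at_right_0_iff:
  fixes F g :: "real \<Rightarrow> real"
  assumes g_pos: "\<forall>\<^sub>F x in at_top. 0 < g x"
  shows "F \<sim>[at_right 0] (\<lambda>t. t * g (1 / t)) \<longleftrightarrow> ((\<lambda>x. x * F (1 / x) / g x) \<longlongrightarrow> 1) at_top"
proof -
  have "\<forall>\<^sub>F x in at_top. (if F (inverse x) = 0 \<and> inverse x * g (1 / inverse x) = 0 then 1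
      else F (inverse x) / (inverse x * g (1 / inverse x))) = x * F (1 / x) / g x"
    using eventually_conj[OF g_pos eventually_gt_at_top[of 0]] by eventually_elim (simp add: field_simps)
  then show ?thesis
    unfolding asymp_equiv_def at_right_to_top filterlim_filtermap by (rule tendsto_cong)
qed

section \<open>A Tauberian theorem for counting functions\<close>

text \<open>In the application N = rho and V x is the mass of the atoms below 1/x.\<close>

locale counting_tail =
  fixes V N :: "real \<Rightarrow> real"
  assumes increment_bounds:
      "\<And>x y. 0 < x \<Longrightarrow> x \<le> y \<Longrightarrow> (N y - N x) / y \<le> V x - V y \<and> V x - V y \<le> (N y - N x) / x"
    and tail_tendsto_zero: "(V \<longlongrightarrow> 0) at_top"
begin

lemma increment_nonneg:
  assumes "0 < x" "x \<le> y"
  shows "0 \<le> N y - N x"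
proof (rule ccontr)
  assume neg: "\<not> 0 \<le> N y - N x"
  then have "x < y"
    using assms by (cases "x = y") auto
  then have "(N y - N x) / x < (N y - N x) / y"
    using neg assms by (intro divide_strict_left_mono_neg) auto
  with increment_bounds[OF assms] show False
    by linarith
qed

lemma tail_antimono:
  assumes "0 < x" "x \<le> y"
  shows "V y \<le> V x"
proof -
  have "0 \<le> (N y - N x) / y"
    using assms increment_nonneg[OF assms] by simp
  with increment_bounds[OF assms] show ?thesis
    by linarith
qed

lemma tail_nonneg: "0 < x \<Longrightarrow> 0 \<le> V x"
  by (rule tendsto_upperbound[OF tail_tendsto_zero])
     (auto intro: tail_antimono eventually_mono[OF eventually_ge_at_top[of x]])

lemma tail_telescope: "(\<Sum>j<n. V (mu ^ j * x) - V (mu * (mu ^ j * x))) = V x - V (mu ^ n * x)"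
  using sum_lessThan_telescope'[of "\<lambda>j. V (mu ^ j * x)" n] by (simp add: mult.assoc)

lemma increment_geometric_blocks:
  assumes t: "0 < t" and mu: "1 \<le> mu"
  shows "(\<Sum>j<n. mu ^ j * t * (V (mu ^ j * t) - V (mu * (mu ^ j * t)))) \<le> N (mu ^ n * t) - N t
      \<and> N (mu ^ n * t) - N t \<le> mu * (\<Sum>j<n. mu ^ j * t * (V (mu ^ j * t) - V (mu * (mu ^ j * t))))"
proof -
  have block: "y * (V y - V (mu * y)) \<le> N (mu * y) - N y \<and> N (mu * y) - N y \<le> mu * (y * (V y - V (mu * y)))"
    if "0 < y" for y
  proof -
    have "y \<le> mu * y" "0 < mu * y"
      using that mu by (auto simp: mult_le_cancel_right1)
    with increment_bounds[of y "mu * y"] that show ?thesis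
      by (simp add: pos_le_divide_eq pos_divide_le_eq mult.commute mult.left_commute)
  qed
  have "N (mu ^ n * t) - N t = (\<Sum>j<n. N (mu * (mu ^ j * t)) - N (mu ^ j * t))"
    using sum_lessThan_telescope[of "\<lambda>j. N (mu ^ j * t)" n] by (simp add: mult.assoc)
  with block t mu show ?thesis
    unfolding sum_distrib_left by (auto intro: sum_mono)
qed

lemma tail_le_geometric:
  assumes x: "0 < x" and mu: "1 < mu" and r: "0 \<le> r" "r < 1"
    and blocks: "\<And>j. x * (V (mu ^ j * x) - V (mu * (mu ^ j * x))) \<le> c * r ^ j"
  shows "x * V x \<le> c / (1 - r)"
proof (rule field_le_epsilon)
  fix e :: real assume e: "0 < e"
  have "0 \<le> x * (V x - V (mu * x))"
    using x mu tail_antimono[of x "mu * x"] by simp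
  then have c: "0 \<le> c"
    using blocks[of 0] by simp
  obtain Y where Y: "\<And>y. Y \<le> y \<Longrightarrow> V y < e / x"
    using order_tendstoD(2)[OF tail_tendsto_zero, of "e / x"] e x
    unfolding eventually_at_top_linorder by auto
  obtain K where "Y / x < mu ^ K"
    using real_arch_pow[OF mu] by blast
  then have "Y \<le> mu ^ K * x"
    using x by (simp add: pos_divide_less_eq)
  then have "x * V (mu ^ K * x) < e"
    using Y x by (simp add: pos_less_divide_eq mult.commute)
  then have tail: "x * V (mu ^ K * x) \<le> e"
    by simp
  have "x * V x = (\<Sum>j<K. x * (V (mu ^ j * x) - V (mu * (mu ^ j * x)))) + x * V (mu ^ K * x)"
    by (simp add: tail_telescope flip: sum_distrib_left) (simp add: algebra_simps)
  also have "\<dots> \<le> c * (\<Sum>j<K. r ^ j) + e"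
    using tail by (intro add_mono) (auto simp: sum_distrib_left intro: sum_mono blocks)
  also have "\<dots> \<le> c / (1 - r) + e"
  proof -
    have "(\<Sum>j<K. r ^ j) \<le> 1 / (1 - r)"
      using r by (simp add: sum_gp_strict divide_right_mono)
    then show ?thesis
      using mult_left_mono[OF _ c] by fastforce
  qed
  finally show "x * V x \<le> c / (1 - r) + e" .
qed

lemma increment_bounds_of_regular:
  assumes sv: "slowly_varying g" and reg: "((\<lambda>x. x * V x / g x) \<longlongrightarrow> 1) at_top" and mu: "1 < mu"
  shows "\<forall>a < ln (mu ^ n) / mu. \<forall>\<^sub>F t in at_top. a < (N (mu ^ n * t) - N t) / g t"
    and "\<forall>a > mu * ln (mu ^ n). \<forall>\<^sub>F t in at_top. (N (mu ^ n * t) - N t) / g t < a"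
proof -
  define A where "A t = (\<Sum>j<n. mu ^ j * t * (V (mu ^ j * t) - V (mu * (mu ^ j * t))) / g t)" for t
  have "(A \<longlongrightarrow> (\<Sum>j<n. 1 - 1 / mu)) at_top"
    unfolding A_def using mu by (intro tendsto_sum regular_increment_tendsto[OF sv reg]) auto
  then have A_lim: "(A \<longlongrightarrow> n * (1 - 1 / mu)) at_top"
    by simp
  have sandwich: "\<forall>\<^sub>F t in at_top. A t \<le> (N (mu ^ n * t) - N t) / g t \<and> (N (mu ^ n * t) - N t) / g t \<le> mu * A t"
    using eventually_gt_at_top[of 0] slowly_varying_eventually_pos[OF sv]
  proof eventually_elim
    case (elim t)
    with increment_geometric_blocks[of t mu n] mu show ?case
      by (simp add: A_def divide_right_mono flip: sum_divide_distrib)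
  qed
  show "\<forall>a < ln (mu ^ n) / mu. \<forall>\<^sub>F t in at_top. a < (N (mu ^ n * t) - N t) / g t"
  proof (intro allI impI)
    fix a assume "a < ln (mu ^ n) / mu"
    then have "\<forall>\<^sub>F t in at_top. a < A t"
      using ln_power_bounds(1)[of mu n] mu by (intro order_tendstoD(1)[OF A_lim]) simp
    with sandwich show "\<forall>\<^sub>F t in at_top. a < (N (mu ^ n * t) - N t) / g t"
      by eventually_elim (blast intro: order_less_le_trans)
  qed
  have muA_lim: "((\<lambda>t. mu * A t) \<longlongrightarrow> mu * (n * (1 - 1 / mu))) at_top"
    by (intro tendsto_mult tendsto_const A_lim)
  show "\<forall>a > mu * ln (mu ^ n). \<forall>\<^sub>F t in at_top. (N (mu ^ n * t) - N t) / g t < a"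
  proof (intro allI impI)
    fix a assume a: "mu * ln (mu ^ n) < a"
    have "mu * (n * (1 - 1 / mu)) \<le> mu * ln (mu ^ n)"
      using ln_power_bounds(2)[of mu n] mu by (intro mult_left_mono) auto
    then have "\<forall>\<^sub>F t in at_top. mu * A t < a"
      using a by (intro order_tendstoD(2)[OF muA_lim]) linarith
    with sandwich show "\<forall>\<^sub>F t in at_top. (N (mu ^ n * t) - N t) / g t < a"
      by eventually_elim (blast intro: order_le_less_trans)
  qed
qed

lemma increments_tendsto_ln_of_regular:
  assumes sv: "slowly_varying g" and reg: "((\<lambda>x. x * V x / g x) \<longlongrightarrow> 1) at_top" and lam: "0 < lam"
  shows "((\<lambda>t. (N (lam * t) - N t) / g t) \<longlongrightarrow> ln lam) at_top"
proof -
  have gt1: "((\<lambda>t. (N (lam * t) - N t) / g t) \<longlongrightarrow> ln lam) at_top" if lam: "1 < lam" for lam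
  proof (rule tendsto_from_approximate_bounds
      [where G = sequentially and lo = "\<lambda>n. ln lam / root n lam" and up = "\<lambda>n. root n lam * ln lam"])
    have "(\<lambda>n. root n lam) \<longlonglongrightarrow> 1"
      using lam by (intro LIMSEQ_root_const) auto
    then show "(\<lambda>n. ln lam / root n lam) \<longlonglongrightarrow> ln lam" "(\<lambda>n. root n lam * ln lam) \<longlonglongrightarrow> ln lam"
      by (auto intro!: tendsto_eq_intros)
    show "\<forall>\<^sub>F n in sequentially. (\<forall>a < ln lam / root n lam. \<forall>\<^sub>F t in at_top. a < (N (lam * t) - N t) / g t)
        \<and> (\<forall>a > root n lam * ln lam. \<forall>\<^sub>F t in at_top. (N (lam * t) - N t) / g t < a)"
      using eventually_gt_at_top[of "0::nat"]
    proof eventually_elim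
      case (elim n)
      then have "1 < root n lam" "root n lam ^ n = lam"
        using lam by auto
      then show ?case
        using increment_bounds_of_regular[OF sv reg, of "root n lam" n] by simp
    qed
  qed simp
  consider "1 < lam" | "lam = 1" | "lam < 1"
    by linarith
  then show ?thesis
  proof cases
    case 3
    have "((\<lambda>t. (N ((1 / lam) * (lam * t)) - N (lam * t)) / g t) \<longlongrightarrow> ln (1 / lam)) at_top"
      using 3 lam by (intro slowly_varying_dilate_quotient[OF sv, where f = "\<lambda>x. N ((1 / lam) * x) - N x"] gt1) auto
    then have "((\<lambda>t. - ((N t - N (lam * t)) / g t)) \<longlongrightarrow> - ln (1 / lam)) at_top"
      using lam by (intro tendsto_minus) simp
    then show ?thesis
      using lam by (simp add: ln_div minus_divide_left)
  qed (use gt1 in auto)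
qed

lemma weighted_increments_le_tail:
  assumes x: "0 < x" and mu: "1 < mu"
  shows "(\<Sum>j<K. (N (mu * (mu ^ j * x)) - N (mu ^ j * x)) / mu ^ (j + 1)) \<le> x * V x"
proof -
  have "(N (mu * (mu ^ j * x)) - N (mu ^ j * x)) / mu ^ (j + 1) \<le> x * (V (mu ^ j * x) - V (mu * (mu ^ j * x)))"
    for j
  proof -
    define y where "y = mu ^ j * x"
    have "0 < y" "y \<le> mu * y"
      using x mu by (simp_all add: y_def)
    then have "(N (mu * y) - N y) / (mu * y) \<le> V y - V (mu * y)"
      using increment_bounds[of y "mu * y"] by simp
    then have "x * ((N (mu * y) - N y) / (mu * y)) \<le> x * (V y - V (mu * y))"
      using x by (intro mult_left_mono) auto
    moreover have "x * ((N (mu * y) - N y) / (mu * y)) = (N (mu * y) - N y) / mu ^ (j + 1)"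
      using x mu by (simp add: y_def field_simps)
    ultimately show ?thesis
      by (simp add: y_def)
  qed
  then have "(\<Sum>j<K. (N (mu * (mu ^ j * x)) - N (mu ^ j * x)) / mu ^ (j + 1))
      \<le> x * (\<Sum>j<K. V (mu ^ j * x) - V (mu * (mu ^ j * x)))"
    unfolding sum_distrib_left by (rule sum_mono)
  also have "\<dots> \<le> x * V x"
    using tail_nonneg[of "mu ^ K * x"] x mu by (simp add: tail_telescope)
  finally show ?thesis .
qed

lemma regular_lower_bound:
  assumes sv: "slowly_varying g" and mu: "1 < mu"
    and inc: "((\<lambda>t. (N (mu * t) - N t) / g t) \<longlongrightarrow> ln mu) at_top"
    and a: "a < ln mu / (mu - 1)"
  shows "\<forall>\<^sub>F x in at_top. a < x * V x / g x"
proof -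
  have "(\<lambda>j. ln mu / mu * (1 / mu) ^ j) sums (ln mu / mu * (1 / (1 - 1 / mu)))"
    using mu by (intro sums_mult geometric_sums) auto
  also have "(\<lambda>j. ln mu / mu * (1 / mu) ^ j) = (\<lambda>j. ln mu / mu ^ (j + 1))"
    using mu by (simp add: fun_eq_iff field_simps)
  also have "ln mu / mu * (1 / (1 - 1 / mu)) = ln mu / (mu - 1)"
    using mu by (simp add: field_simps)
  finally have "(\<lambda>K. \<Sum>j<K. ln mu / mu ^ (j + 1)) \<longlonglongrightarrow> ln mu / (mu - 1)"
    unfolding sums_def .
  then obtain K where K: "a < (\<Sum>j<K. ln mu / mu ^ (j + 1))"
    using a order_tendstoD(1) eventually_happens' trivial_limit_sequentially by blast
  define T where "T x = (\<Sum>j<K. (N (mu * (mu ^ j * x)) - N (mu ^ j * x)) / g x / mu ^ (j + 1))" for x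
  have "(T \<longlongrightarrow> (\<Sum>j<K. ln mu / mu ^ (j + 1))) at_top"
    unfolding T_def using mu
    by (intro tendsto_sum tendsto_divide tendsto_const
          slowly_varying_dilate_quotient[OF sv, where f = "\<lambda>x. N (mu * x) - N x"] inc) auto
  then have "\<forall>\<^sub>F x in at_top. a < T x"
    using K by (rule order_tendstoD(1))
  moreover have "\<forall>\<^sub>F x in at_top. T x \<le> x * V x / g x"
    using eventually_gt_at_top[of 0] slowly_varying_eventually_pos[OF sv]
  proof eventually_elim
    case (elim x)
    have "T x = (\<Sum>j<K. (N (mu * (mu ^ j * x)) - N (mu ^ j * x)) / mu ^ (j + 1)) / g x"
      by (simp add: T_def sum_divide_distrib mult.commute)
    also have "\<dots> \<le> x * V x / g x"
      using elim mu by (intro divide_right_mono weighted_increments_le_tail) auto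
    finally show ?case .
  qed
  ultimately show ?thesis
    by eventually_elim (rule order_less_le_trans)
qed

text \<open>The slack d makes the series over all blocks converge despite the growth of g.\<close>

lemma regular_upper_bound_slack:
  assumes sv: "slowly_varying g" and mu: "1 < mu" and d: "0 < d" "1 + d < mu"
    and inc: "\<forall>\<^sub>F y in at_top. (N (mu * y) - N y) / g y < ln mu + d"
  shows "\<forall>\<^sub>F x in at_top. x * V x / g x \<le> (ln mu + d) / (1 - (1 + d) / mu)"
proof -
  define r where "r = (1 + d) / mu"
  have r: "0 \<le> r" "r < 1"
    using d mu by (auto simp: r_def)
  obtain x0 where x0: "\<And>y. x0 \<le> y \<Longrightarrow> 0 < g y \<and> (N (mu * y) - N y) / g y < ln mu + d"
    using eventually_conj[OF slowly_varying_eventually_pos[OF sv] inc]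
    unfolding eventually_at_top_linorder by blast
  show ?thesis
    using eventually_ge_at_top[of "max x0 1"] slowly_varying_geometric_bound[OF sv less_imp_le[OF mu] d(1)]
  proof eventually_elim
    case (elim x)
    then have x: "0 < x" "x0 \<le> x" and gx: "0 < g x"
      using x0 by auto
    have "x * (V (mu ^ j * x) - V (mu * (mu ^ j * x))) \<le> (ln mu + d) * g x * r ^ j" for j
    proof -
      define y where "y = mu ^ j * x"
      have "0 < y"
        using x mu by (simp add: y_def)
      then have y: "x \<le> y" "0 < y" "y \<le> mu * y"
        using x mu by (simp_all add: y_def)
      then have "x * (V y - V (mu * y)) \<le> x * ((N (mu * y) - N y) / y)"
        using increment_bounds[of y "mu * y"] x by (intro mult_left_mono) auto
      also have "\<dots> = (N (mu * y) - N y) / mu ^ j"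
        using x mu by (simp add: y_def)
      also have "\<dots> \<le> (ln mu + d) * g y / mu ^ j"
        using x0[of y] x y mu by (intro divide_right_mono) (auto simp: pos_divide_less_eq)
      also have "\<dots> \<le> (ln mu + d) * ((1 + d) ^ j * g x) / mu ^ j"
        using elim mu d by (intro divide_right_mono mult_left_mono) (auto simp: y_def)
      also have "\<dots> = (ln mu + d) * g x * r ^ j"
        by (simp add: r_def power_divide)
      finally show ?thesis
        by (simp add: y_def)
    qed
    then have "x * V x \<le> (ln mu + d) * g x / (1 - r)"
      by (rule tail_le_geometric[OF x(1) mu r])
    then have "x * V x / g x \<le> (ln mu + d) * g x / (1 - r) / g x"
      using gx by (intro divide_right_mono) auto
    then show ?case
      using gx by (simp add: r_def)
  qed
qed

lemma regular_upper_bound: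
  assumes sv: "slowly_varying g" and mu: "1 < mu"
    and inc: "((\<lambda>t. (N (mu * t) - N t) / g t) \<longlongrightarrow> ln mu) at_top"
    and a: "mu * ln mu / (mu - 1) < a"
  shows "\<forall>\<^sub>F x in at_top. x * V x / g x < a"
proof -
  have "((\<lambda>d. (ln mu + d) / (1 - (1 + d) / mu)) \<longlongrightarrow> (ln mu + 0) / (1 - (1 + 0) / mu)) (at_right 0)"
    using mu by (intro tendsto_intros) auto
  moreover have "(ln mu + 0) / (1 - (1 + 0) / mu) = mu * ln mu / (mu - 1)"
    using mu by (simp add: field_simps)
  ultimately have "\<forall>\<^sub>F d in at_right 0. (ln mu + d) / (1 - (1 + d) / mu) < a"
    using order_tendstoD(2)[OF _ a] by simp
  moreover have "\<forall>\<^sub>F d in at_right 0. d \<in> {0<..<mu - 1}"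
    using mu by (intro eventually_at_right_real) simp
  ultimately have "\<forall>\<^sub>F d in at_right 0. (ln mu + d) / (1 - (1 + d) / mu) < a \<and> d \<in> {0<..<mu - 1}"
    by (rule eventually_conj)
  then obtain d where d: "0 < d" "d < mu - 1" and d_a: "(ln mu + d) / (1 - (1 + d) / mu) < a"
    using eventually_happens'[OF trivial_limit_at_right_real] by auto
  have "1 + d < mu"
    using d by simp
  moreover have "\<forall>\<^sub>F y in at_top. (N (mu * y) - N y) / g y < ln mu + d"
    using d by (intro order_tendstoD(2)[OF inc]) simp
  ultimately have "\<forall>\<^sub>F x in at_top. x * V x / g x \<le> (ln mu + d) / (1 - (1 + d) / mu)"
    by (rule regular_upper_bound_slack[OF sv mu d(1)])
  then show ?thesis
    by eventually_elim (use d_a in simp)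
qed

theorem regular_iff_increments_tendsto_ln:
  assumes sv: "slowly_varying g"
  shows "((\<lambda>x. x * V x / g x) \<longlongrightarrow> 1) at_top
     \<longleftrightarrow> (\<forall>lam>0. ((\<lambda>t. (N (lam * t) - N t) / g t) \<longlongrightarrow> ln lam) at_top)"
proof
  assume "((\<lambda>x. x * V x / g x) \<longlongrightarrow> 1) at_top"
  then show "\<forall>lam>0. ((\<lambda>t. (N (lam * t) - N t) / g t) \<longlongrightarrow> ln lam) at_top"
    using increments_tendsto_ln_of_regular[OF sv] by blast
next
  assume inc: "\<forall>lam>0. ((\<lambda>t. (N (lam * t) - N t) / g t) \<longlongrightarrow> ln lam) at_top"
  show "((\<lambda>x. x * V x / g x) \<longlongrightarrow> 1) at_top"
  proof (rule tendsto_from_approximate_bounds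
      [where G = "at_right 1" and lo = "\<lambda>mu. ln mu / (mu - 1)" and up = "\<lambda>mu. mu * ln mu / (mu - 1)"])
    show "((\<lambda>mu::real. ln mu / (mu - 1)) \<longlongrightarrow> 1) (at_right 1)"
      by real_asymp
    show "((\<lambda>mu::real. mu * ln mu / (mu - 1)) \<longlongrightarrow> 1) (at_right 1)"
      by real_asymp
    show "\<forall>\<^sub>F mu in at_right 1. (\<forall>a < ln mu / (mu - 1). \<forall>\<^sub>F x in at_top. a < x * V x / g x)
        \<and> (\<forall>a > mu * ln mu / (mu - 1). \<forall>\<^sub>F x in at_top. x * V x / g x < a)"
      using eventually_at_right_less
    proof eventually_elim
      case (elim mu)
      with inc have "((\<lambda>t. (N (mu * t) - N t) / g t) \<longlongrightarrow> ln mu) at_top"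
        by simp
      with elim show ?case
        using regular_lower_bound[OF sv] regular_upper_bound[OF sv] by blast
    qed
  qed simp
qed

end

section \<open>Distributions on the positive integers\<close>

locale nat_distribution =
  fixes p :: "nat \<Rightarrow> real"
  assumes nonneg: "\<forall>k\<ge>1. 0 \<le> p k"
    and prob: "(p has_sum 1) {1..}"
begin

definition mass_below :: "real \<Rightarrow> real" where
  "mass_below a = infsum p {k. 1 \<le> k \<and> p k < a}"

definition mass_upto :: "real \<Rightarrow> real" where
  "mass_upto a = infsum p {k. 1 \<le> k \<and> p k \<le> a}"

lemma summable_on_subset: "A \<subseteq> {1..} \<Longrightarrow> p summable_on A"
  by (rule summable_on_subset_banach[OF has_sum_imp_summable[OF prob]])

lemma infsum_mono_subset: "A \<subseteq> B \<Longrightarrow> B \<subseteq> {1..} \<Longrightarrow> infsum p A \<le> infsum p B"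
  by (rule infsum_mono_neutral) (use summable_on_subset nonneg in auto)

lemma infsum_le_one: "A \<subseteq> {1..} \<Longrightarrow> infsum p A \<le> 1"
  using infsum_mono_subset[of A "{1..}"] infsumI[OF prob] by simp

lemma mass_upto_le_mass_below: "a < b \<Longrightarrow> mass_upto a \<le> mass_below b"
  unfolding mass_upto_def mass_below_def by (rule infsum_mono_subset) auto

lemma mass_below_le_mass_upto: "a \<le> b \<Longrightarrow> mass_below a \<le> mass_upto b"
  unfolding mass_upto_def mass_below_def by (rule infsum_mono_subset) auto

lemma mass_below_mono: "a \<le> b \<Longrightarrow> mass_below a \<le> mass_below b"
  unfolding mass_below_def by (rule infsum_mono_subset) auto

lemma finite_heavy_atoms:
  assumes b: "0 < b"
  shows "finite {k. 1 \<le> k \<and> b \<le> p k}"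
proof (rule ccontr)
  let ?S = "{k. 1 \<le> k \<and> b \<le> p k}"
  assume "infinite ?S"
  obtain n :: nat where n: "1 / b < n"
    using reals_Archimedean2 by blast
  obtain B where B: "finite B" "card B = n" "B \<subseteq> ?S"
    using \<open>infinite ?S\<close> infinite_arbitrarily_large by blast
  have "n * b = (\<Sum>k\<in>B. b)"
    using B by simp
  also have "\<dots> \<le> sum p B"
    using B by (intro sum_mono) auto
  also have "\<dots> = infsum p B"
    using B by simp
  also have "\<dots> \<le> 1"
    using B by (intro infsum_le_one) auto
  finally show False
    using n b by (simp add: divide_less_eq)
qed

lemma rho_increment:
  assumes "0 < x" "x \<le> y"
  shows "real (rho p y) - real (rho p x) = card {k. 1 \<le> k \<and> 1 / y \<le> p k \<and> p k < 1 / x}"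
proof -
  have "1 / y \<le> 1 / x"
    using assms by (simp add: frac_le)
  then have split: "{k. 1 \<le> k \<and> 1 / y \<le> p k}
      = {k. 1 \<le> k \<and> 1 / x \<le> p k} \<union> {k. 1 \<le> k \<and> 1 / y \<le> p k \<and> p k < 1 / x}"
    by auto
  have "finite {k. 1 \<le> k \<and> 1 / y \<le> p k \<and> p k < 1 / x}"
    using assms by (intro finite_subset[OF _ finite_heavy_atoms[of "1 / y"]]) auto
  then have "card {k. 1 \<le> k \<and> 1 / y \<le> p k}
      = card {k. 1 \<le> k \<and> 1 / x \<le> p k} + card {k. 1 \<le> k \<and> 1 / y \<le> p k \<and> p k < 1 / x}"
    unfolding split using assms by (intro card_Un_disjoint finite_heavy_atoms) auto
  then show ?thesis
    by (simp add: rho_def divide_inverse)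
qed

lemma mass_below_increment:
  assumes "0 < b" "b \<le> a"
  shows "mass_below a - mass_below b = sum p {k. 1 \<le> k \<and> b \<le> p k \<and> p k < a}"
proof -
  have split: "{k. 1 \<le> k \<and> p k < a} = {k. 1 \<le> k \<and> p k < b} \<union> {k. 1 \<le> k \<and> b \<le> p k \<and> p k < a}"
    using assms by auto
  have "finite {k. 1 \<le> k \<and> b \<le> p k \<and> p k < a}"
    using assms by (intro finite_subset[OF _ finite_heavy_atoms[of b]]) auto
  moreover have "mass_below a = mass_below b + infsum p {k. 1 \<le> k \<and> b \<le> p k \<and> p k < a}"
    unfolding mass_below_def split by (rule infsum_Un_disjoint) (auto intro: summable_on_subset)
  ultimately show ?thesis
    by simp
qed

lemma mass_below_small:
  assumes e: "0 < e"
  shows "\<exists>a>0. mass_below a < e"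
proof -
  have "\<forall>\<^sub>F K in finite_subsets_at_top {1..}. dist (sum p K) 1 < e"
    using prob e unfolding has_sum_def tendsto_iff by blast
  then obtain K where K: "finite K" "K \<subseteq> {1..}" "dist (sum p K) 1 < e"
    unfolding eventually_finite_subsets_at_top by blast
  define K' where "K' = {k\<in>K. 0 < p k}"
  have "finite K'" "K' \<subseteq> {1..}"
    using K by (auto simp: K'_def)
  have "sum p K' = sum p K"
    unfolding K'_def by (rule sum.mono_neutral_left) (use K nonneg in \<open>auto simp: less_le\<close>)
  define a where "a = (if K' = {} then 1 else Min (p ` K'))"
  have "0 < a"
    using \<open>finite K'\<close> by (auto simp: a_def K'_def)
  have "{k. 1 \<le> k \<and> p k < a} \<inter> K' = {}"
    using \<open>finite K'\<close> by (auto simp: a_def)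
  then have "mass_below a + sum p K' = infsum p ({k. 1 \<le> k \<and> p k < a} \<union> K')"
    unfolding mass_below_def using \<open>finite K'\<close> \<open>K' \<subseteq> {1..}\<close>
    by (subst infsum_Un_disjoint) (auto intro!: summable_on_subset)
  also have "\<dots> \<le> 1"
    using \<open>K' \<subseteq> {1..}\<close> by (intro infsum_le_one) auto
  finally have "mass_below a \<le> 1 - sum p K"
    using \<open>sum p K' = sum p K\<close> by simp
  also have "\<dots> < e"
    using K(3) by (simp add: dist_real_def)
  finally show ?thesis
    using \<open>0 < a\<close> by blast
qed

lemma mass_below_tendsto_zero: "(mass_below \<longlongrightarrow> 0) (at_right 0)"
proof (rule order_tendstoI)
  fix e :: real assume "e < 0"
  moreover have "0 \<le> mass_below t" for t
    unfolding mass_below_def using nonneg by (intro infsum_nonneg) auto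
  ultimately show "\<forall>\<^sub>F t in at_right 0. e < mass_below t"
    by (intro always_eventually) (auto intro: less_le_trans)
next
  fix e :: real assume "0 < e"
  then obtain a where "0 < a" "mass_below a < e"
    using mass_below_small by blast
  show "\<forall>\<^sub>F t in at_right 0. mass_below t < e"
    using eventually_at_right_real[OF \<open>0 < a\<close>]
  proof eventually_elim
    case (elim t)
    then have "mass_below t \<le> mass_below a"
      by (intro mass_below_mono) simp
    with \<open>mass_below a < e\<close> show ?case
      by linarith
  qed
qed

sublocale counting_tail "\<lambda>x. mass_below (1 / x)" "\<lambda>t. real (rho p t)"
proof
  fix x y :: real assume xy: "0 < x" "x \<le> y"
  let ?S = "{k. 1 \<le> k \<and> 1 / y \<le> p k \<and> p k < 1 / x}"
  have mass: "mass_below (1 / x) - mass_below (1 / y) = sum p ?S"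
    using xy by (intro mass_below_increment) (auto simp: frac_le)
  have count: "real (rho p y) - real (rho p x) = card ?S"
    using rho_increment[OF xy] .
  have "(\<Sum>k\<in>?S. 1 / y) \<le> sum p ?S" "sum p ?S \<le> (\<Sum>k\<in>?S. 1 / x)"
    by (rule sum_mono; simp)+
  then show "(real (rho p y) - real (rho p x)) / y \<le> mass_below (1 / x) - mass_below (1 / y)
      \<and> mass_below (1 / x) - mass_below (1 / y) \<le> (real (rho p y) - real (rho p x)) / x"
    unfolding mass count by simp
next
  show "((\<lambda>x. mass_below (1 / x)) \<longlongrightarrow> 0) at_top"
    using mass_below_tendsto_zero unfolding filterlim_at_right_to_top by (simp add: inverse_eq_divide)
qed

lemma truncated_sum_eq_mass_upto: "infsum (\<lambda>k. if p k \<le> t then p k else 0) {1..} = mass_upto t"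
  unfolding mass_upto_def by (rule infsum_cong_neutral) auto

lemma regular_mass_upto_iff_mass_below:
  assumes sv: "slowly_varying g"
  shows "((\<lambda>x. x * mass_upto (1 / x) / g x) \<longlongrightarrow> 1) at_top
     \<longleftrightarrow> ((\<lambda>x. x * mass_below (1 / x) / g x) \<longlongrightarrow> 1) at_top"
proof
  assume "((\<lambda>x. x * mass_upto (1 / x) / g x) \<longlongrightarrow> 1) at_top"
  then show "((\<lambda>x. x * mass_below (1 / x) / g x) \<longlongrightarrow> 1) at_top"
  proof (rule regular_of_sandwich_dilations[OF sv])
    fix mu :: real assume mu: "1 < mu"
    show "\<forall>\<^sub>F x in at_top. mass_upto (1 / (mu * x)) \<le> mass_below (1 / x)
        \<and> mass_below (1 / x) \<le> mass_upto (1 / (x / mu))"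
      using eventually_gt_at_top[of 0] by eventually_elim
        (use mu in \<open>auto intro!: mass_upto_le_mass_below mass_below_le_mass_upto simp: field_simps\<close>)
  qed
next
  assume "((\<lambda>x. x * mass_below (1 / x) / g x) \<longlongrightarrow> 1) at_top"
  then show "((\<lambda>x. x * mass_upto (1 / x) / g x) \<longlongrightarrow> 1) at_top"
  proof (rule regular_of_sandwich_dilations[OF sv])
    fix mu :: real assume mu: "1 < mu"
    show "\<forall>\<^sub>F x in at_top. mass_below (1 / (mu * x)) \<le> mass_upto (1 / x)
        \<and> mass_upto (1 / x) \<le> mass_below (1 / (x / mu))"
      using eventually_gt_at_top[of 0] by eventually_elim
        (use mu in \<open>auto intro!: mass_upto_le_mass_below mass_below_le_mass_upto simp: field_simps\<close>)
  qed
qed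

end

theorem lemma2p3:
  fixes p :: "nat \<Rightarrow> real" and g :: "real \<Rightarrow> real"
  assumes nonneg: "\<forall>k\<ge>1. p k \<ge> 0"
    and prob: "(p has_sum 1) {1..}"
    and inf_supp: "infinite {k. 1 \<le> k \<and> p k > 0}"
    and sv: "slowly_varying g"
  shows "(\<lambda>t. infsum (\<lambda>k. if p k \<le> t then p k else 0) {1..}) \<sim>[at_right 0] (\<lambda>t. t * g (1 / t))
     \<longleftrightarrow> (\<forall>lam>0. ((\<lambda>t. (real (rho p (lam * t)) - real (rho p t)) / g t) \<longlongrightarrow> ln lam) at_top)"
proof -
  interpret nat_distribution p
    using nonneg prob by unfold_locales
  have "(\<lambda>t. infsum (\<lambda>k. if p k \<le> t then p k else 0) {1..}) \<sim>[at_right 0] (\<lambda>t. t * g (1 / t))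
      \<longleftrightarrow> ((\<lambda>x. x * mass_upto (1 / x) / g x) \<longlongrightarrow> 1) at_top"
    unfolding truncated_sum_eq_mass_upto
    by (rule asymp_equiv_at_right_0_iff[OF slowly_varying_eventually_pos[OF sv]])
  also have "\<dots> \<longleftrightarrow> ((\<lambda>x. x * mass_below (1 / x) / g x) \<longlongrightarrow> 1) at_top"
    by (rule regular_mass_upto_iff_mass_below[OF sv])
  also have "\<dots> \<longleftrightarrow> (\<forall>lam>0. ((\<lambda>t. (real (rho p (lam * t)) - real (rho p t)) / g t) \<longlongrightarrow> ln lam) at_top)"
    by (rule regular_iff_increments_tendsto_ln[OF sv])
  finally show ?thesis .
qed

end
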